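(* Let $\mathcal{T}$ be an almost linear iteration tree with tree order $T$, and let $\lambda\le\mathrm{lh}(\mathcal{T})$ be a limit ordinal (or $\lambda=\mathrm{OR}$). Then $\mathcal{T}\restriction\lambda$ has a unique cofinal branch $b$, and if $\lambda<\mathrm{lh}(\mathcal{T})$ then $b=[0,\lambda)_T$.
   Context: Iteration trees are as in inner model theory (Mitchell–Steel, "Fine structure and iteration trees"): $T$ is the tree order on $\mathrm{lh}(\mathcal{T})$, $[0,\alpha)_T$ denotes the set of $T$-predecessors of $\alpha$, and $T\text{-pred}(i+1)$ is the immediate $T$-predecessor of $i+1$. An iteration tree $\mathcal{T}$ is almost linear if (a) for all $i+1<\mathrm{lh}(\mathcal{T})$ we have $T\text{-pred}(i+1)\in[0,i]_T$, and (b) every $i<\mathrm{lh}(\mathcal{T})$ has only finitely many immediate $T$-successors. A cofinal branch of $\mathcal{T}\restriction\lambda$ is a set $b\subseteq\lambda$ which is linearly ordered and downward closed under $T$ and unbounded in $\lambda$. *)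

theory Defs
  imports Main
begin

text \<open>Ordinals are modelled by an arbitrary well-ordered type 'a.  The length
  lh(T) of an iteration tree is modelled by an initial segment L of 'a
  (L = UNIV allowed), and the tree order by a relation T, where T x y means
  x is a T-predecessor of y.  Only the tree-order part of an iteration tree
  matters for the statement.\<close>

definition initial_segment :: "'a::wellorder set \<Rightarrow> bool" where
  "initial_segment L \<longleftrightarrow> (\<forall>x\<in>L. \<forall>y. y < x \<longrightarrow> y \<in> L)"

definition is_succ_of :: "'a::wellorder \<Rightarrow> 'a \<Rightarrow> bool" where
  "is_succ_of i j \<longleftrightarrow> i < j \<and> \<not> (\<exists>k. i < k \<and> k < j)"

definition is_successor :: "'a::wellorder \<Rightarrow> bool" where
  "is_successor j \<longleftrightarrow> (\<exists>i. is_succ_of i j)"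

definition imm_succ :: "('a \<Rightarrow> 'a \<Rightarrow> bool) \<Rightarrow> 'a \<Rightarrow> 'a \<Rightarrow> bool" where
  "imm_succ T i j \<longleftrightarrow> T i j \<and> \<not> (\<exists>k. T i k \<and> T k j)"

definition iteration_tree_order :: "'a::wellorder set \<Rightarrow> ('a \<Rightarrow> 'a \<Rightarrow> bool) \<Rightarrow> bool" where
  "iteration_tree_order L T \<longleftrightarrow>
     initial_segment L \<and> L \<noteq> {} \<and>
     (\<forall>x y. T x y \<longrightarrow> x \<in> L \<and> y \<in> L \<and> x < y) \<and>
     (\<forall>x y z. T x y \<longrightarrow> T y z \<longrightarrow> T x z) \<and>
     (\<forall>z x y. T x z \<longrightarrow> T y z \<longrightarrow> x = y \<or> T x y \<or> T y x) \<and>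
     (\<exists>r\<in>L. \<forall>x\<in>L. x \<noteq> r \<longrightarrow> T r x) \<and>
     (\<forall>j\<in>L. is_successor j \<longrightarrow>
        (\<exists>p. T p j \<and> (\<forall>x. T x j \<longrightarrow> x = p \<or> T x p))) \<and>
     (\<forall>j\<in>L. (\<exists>x. x < j) \<longrightarrow> \<not> is_successor j \<longrightarrow>
        (\<forall>x. x < j \<longrightarrow> (\<exists>y. T y j \<and> x \<le> y)))"

definition almost_linear :: "'a::wellorder set \<Rightarrow> ('a \<Rightarrow> 'a \<Rightarrow> bool) \<Rightarrow> bool" where
  "almost_linear L T \<longleftrightarrow>
     (\<forall>i j p. j \<in> L \<longrightarrow> is_succ_of i j \<longrightarrow> imm_succ T p j \<longrightarrow> p = i \<or> T p i) \<and>
     (\<forall>i\<in>L. finite {j. imm_succ T i j})"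

text \<open>A limit ordinal \<lambda> \<le> lh(T) (or OR), given as the set of ordinals below it.\<close>
definition limit_cut :: "'a::wellorder set \<Rightarrow> 'a set \<Rightarrow> bool" where
  "limit_cut L S \<longleftrightarrow> S \<subseteq> L \<and> initial_segment S \<and> S \<noteq> {} \<and> (\<forall>x\<in>S. \<exists>y\<in>S. x < y)"

definition cofinal_branch :: "('a::wellorder \<Rightarrow> 'a \<Rightarrow> bool) \<Rightarrow> 'a set \<Rightarrow> 'a set \<Rightarrow> bool" where
  "cofinal_branch T S b \<longleftrightarrow> b \<subseteq> S \<and>
     (\<forall>x\<in>b. \<forall>y\<in>b. x = y \<or> T x y \<or> T y x) \<and>
     (\<forall>y\<in>b. \<forall>x. T x y \<longrightarrow> x \<in> b) \<and>
     (\<forall>x\<in>S. \<exists>y\<in>b. x \<le> y)"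

end

theory Submission
  imports Defs
begin

text \<open>The branch is the set of nodes x below \<lambda> that are T-below every node of S above x.
  Almost linearity makes the subtree above any node convex in the ordinal order; this gives
  uniqueness and downward closure.  Finiteness of immediate successors shows that the branch has
  no T-maximum, and the limit clause of iteration trees then forces it to be cofinal: its least
  strict upper bound below \<lambda> would otherwise be the limit node whose predecessors it is.
  When \<lambda> < lh(T), the predecessors of \<lambda> form a cofinal branch, hence the branch.\<close>

definition canonical_branch :: "('a::wellorder \<Rightarrow> 'a \<Rightarrow> bool) \<Rightarrow> 'a set \<Rightarrow> 'a set" where
  "canonical_branch T S = {x \<in> S. \<forall>z\<in>S. x \<le> z \<longrightarrow> x = z \<or> T x z}"

locale iteration_tree =
  fixes L :: "'a::wellorder set" and T :: "'a \<Rightarrow> 'a \<Rightarrow> bool"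
  assumes tree_order: "iteration_tree_order L T"
begin

lemma initial_segment_L: "initial_segment L"
  using tree_order by (simp add: iteration_tree_order_def)

lemma T_less: "T x y \<Longrightarrow> x < y"
  using tree_order by (simp add: iteration_tree_order_def)

lemma T_in_L: "T x y \<Longrightarrow> x \<in> L \<and> y \<in> L"
  using tree_order by (simp add: iteration_tree_order_def)

lemma T_trans: "T x y \<Longrightarrow> T y z \<Longrightarrow> T x z"
  using tree_order unfolding iteration_tree_order_def by metis

lemma T_asym: "T x y \<Longrightarrow> \<not> T y x"
  using T_less by (meson less_asym)

lemma preds_linear: "T x z \<Longrightarrow> T y z \<Longrightarrow> x = y \<or> T x y \<or> T y x"
  using tree_order unfolding iteration_tree_order_def by metis

lemma successor_node_pred:
  "j \<in> L \<Longrightarrow> is_successor j \<Longrightarrow> \<exists>p. T p j \<and> (\<forall>x. T x j \<longrightarrow> x = p \<or> T x p)"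
  using tree_order by (simp add: iteration_tree_order_def)

lemma limit_node_preds_cofinal:
  "j \<in> L \<Longrightarrow> x < j \<Longrightarrow> \<not> is_successor j \<Longrightarrow> \<exists>y. T y j \<and> x \<le> y"
  using tree_order unfolding iteration_tree_order_def by blast

lemma imm_succ_exists_below:
  assumes "T x z"
  shows "\<exists>c. imm_succ T x c \<and> (c = z \<or> T c z)"
proof -
  define c where "c = (LEAST c. T x c \<and> (c = z \<or> T c z))"
  have c: "T x c \<and> (c = z \<or> T c z)"
    unfolding c_def by (rule LeastI[where k = z]) (use assms in auto)
  have "\<not> T x k" if "T k c" for k
  proof
    assume "T x k"
    with c that T_trans have "T x k \<and> (k = z \<or> T k z)" by blast
    then have "c \<le> k" unfolding c_def by (rule Least_le)
    with T_less[OF that] show False by simp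
  qed
  with c show ?thesis unfolding imm_succ_def by blast
qed

lemma imm_succ_unique_below:
  assumes "imm_succ T x c" "imm_succ T x c'" "c = z \<or> T c z" "c' = z \<or> T c' z"
  shows "c = c'"
proof -
  from assms(3,4) have "c = c' \<or> T c c' \<or> T c' c"
    using preds_linear by blast
  with assms(1,2) show ?thesis unfolding imm_succ_def by blast
qed

lemma le_if_preds_have_no_max:
  assumes "w \<in> L"
    and no_max: "\<And>y. T y w \<Longrightarrow> \<exists>c. T y c \<and> T c w"
    and bound: "\<And>y. T y w \<Longrightarrow> y < l"
  shows "w \<le> l"
proof (rule ccontr)
  assume "\<not> w \<le> l"
  then have "l < w" by simp
  show False
  proof (cases "is_successor w")
    case True
    then obtain p where p: "T p w" "\<forall>x. T x w \<longrightarrow> x = p \<or> T x p"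
      using successor_node_pred[OF assms(1)] by blast
    then obtain c where "T p c" "T c w" using no_max by blast
    with p(2) show False using T_asym by blast
  next
    case False
    with \<open>l < w\<close> obtain y where "T y w" "l \<le> y"
      using limit_node_preds_cofinal[OF assms(1)] by blast
    with bound show False by (meson leD)
  qed
qed

lemma not_successor_if_limit_cut:
  assumes "limit_cut L S" "S = {x. x < l}"
  shows "\<not> is_successor l"
proof
  assume "is_successor l"
  then obtain i where i: "is_succ_of i l" unfolding is_successor_def by blast
  with assms have "i \<in> S" unfolding is_succ_of_def by blast
  with assms(1) obtain y where "y \<in> S" "i < y" unfolding limit_cut_def by blast
  with i assms(2) show False unfolding is_succ_of_def by blast
qed

lemma preds_cofinal_branch:
  assumes S: "limit_cut L S" "S = {x. x < l}" and "l \<in> L"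
  shows "cofinal_branch T S {x. T x l}"
proof -
  have "\<exists>y. T y l \<and> x \<le> y" if "x \<in> S" for x
    using limit_node_preds_cofinal[OF \<open>l \<in> L\<close>] not_successor_if_limit_cut[OF S] that S(2)
    by blast
  then show ?thesis
    unfolding cofinal_branch_def using S(2) T_less T_trans preds_linear by auto
qed

end

locale almost_linear_tree = iteration_tree +
  assumes almost_linear: "almost_linear L T"
begin

lemma pred_of_successor: "j \<in> L \<Longrightarrow> is_succ_of i j \<Longrightarrow> imm_succ T p j \<Longrightarrow> p = i \<or> T p i"
  using almost_linear by (simp add: almost_linear_def)

lemma finite_imm_succ: "i \<in> L \<Longrightarrow> finite {j. imm_succ T i j}"
  using almost_linear by (simp add: almost_linear_def)

text \<open>Following the tree downwards from j to x, a successor node k+1 is left towards k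
  rather than towards its tree predecessor; almost linearity keeps k inside the subtree of x.\<close>
lemma subtree_convex:
  assumes "j \<in> L" "x = j \<or> T x j" "x \<le> i" "i \<le> j"
  shows "x = i \<or> T x i"
  using assms
proof (induction j arbitrary: i rule: less_induct)
  case (less j)
  show ?case
  proof (cases "i = j")
    case True
    with less.prems show ?thesis by simp
  next
    case False
    with less.prems have "i < j" "T x j" by auto
    show ?thesis
    proof (cases "is_successor j")
      case True
      then obtain k where k: "is_succ_of k j" unfolding is_successor_def by blast
      obtain p where p: "T p j" "\<forall>y. T y j \<longrightarrow> y = p \<or> T y p"
        using successor_node_pred[OF \<open>j \<in> L\<close> True] by blast
      then have "imm_succ T p j" unfolding imm_succ_def using T_asym by blast
      then have "p = k \<or> T p k" using pred_of_successor[OF \<open>j \<in> L\<close> k] by blast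
      with p \<open>T x j\<close> have "x = k \<or> T x k" using T_trans by metis
      moreover have "k < j" "i \<le> k"
        using k \<open>i < j\<close> unfolding is_succ_of_def by (auto simp: not_le[symmetric])
      moreover have "k \<in> L"
        using \<open>k < j\<close> \<open>j \<in> L\<close> initial_segment_L unfolding initial_segment_def by blast
      ultimately show ?thesis using less.IH \<open>x \<le> i\<close> by blast
    next
      case False
      obtain y where y: "T y j" "i \<le> y"
        using limit_node_preds_cofinal[OF \<open>j \<in> L\<close> \<open>i < j\<close> False] by blast
      have "\<not> T y x" using T_less y(2) \<open>x \<le> i\<close> by (meson leD order_trans)
      with y(1) \<open>T x j\<close> have "x = y \<or> T x y" using preds_linear by blast
      with y show ?thesis using less.IH T_less T_in_L \<open>x \<le> i\<close> by blast
    qed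
  qed
qed

lemma cofinal_branch_eq_canonical:
  assumes "S \<subseteq> L" and c: "cofinal_branch T S c"
  shows "c = canonical_branch T S"
proof
  have c_sub: "c \<subseteq> S" and c_linear: "\<forall>x\<in>c. \<forall>y\<in>c. x = y \<or> T x y \<or> T y x"
    and c_down: "\<forall>y\<in>c. \<forall>x. T x y \<longrightarrow> x \<in> c" and c_cofinal: "\<forall>x\<in>S. \<exists>y\<in>c. x \<le> y"
    using c unfolding cofinal_branch_def by auto
  show "c \<subseteq> canonical_branch T S"
  proof
    fix x assume "x \<in> c"
    have "x = z \<or> T x z" if "z \<in> S" "x \<le> z" for z
    proof -
      obtain y where "y \<in> c" "z \<le> y" using c_cofinal \<open>z \<in> S\<close> by blast
      with \<open>x \<in> c\<close> \<open>x \<le> z\<close> c_linear have "x = y \<or> T x y"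
        using T_less by (meson leD order_trans)
      with \<open>y \<in> c\<close> \<open>z \<le> y\<close> \<open>x \<le> z\<close> show ?thesis
        using subtree_convex c_sub assms(1) by blast
    qed
    with \<open>x \<in> c\<close> c_sub show "x \<in> canonical_branch T S"
      unfolding canonical_branch_def by blast
  qed
  show "canonical_branch T S \<subseteq> c"
  proof
    fix x assume x: "x \<in> canonical_branch T S"
    then obtain y where "y \<in> c" "x \<le> y" using c_cofinal unfolding canonical_branch_def by blast
    with x c_sub have "x = y \<or> T x y" unfolding canonical_branch_def by blast
    with \<open>y \<in> c\<close> c_down show "x \<in> c" by blast
  qed
qed

lemma canonical_branch_down_closed:
  assumes "initial_segment S" "y \<in> canonical_branch T S" "T x y"
  shows "x \<in> canonical_branch T S"
proof -
  have "y \<in> S" using assms(2) unfolding canonical_branch_def by blast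
  then have "x \<in> S" using assms(1,3) T_less unfolding initial_segment_def by blast
  moreover have "x = z \<or> T x z" if "z \<in> S" "x \<le> z" for z
  proof (cases "y \<le> z")
    case True
    with assms(2) that(1) have "y = z \<or> T y z" unfolding canonical_branch_def by blast
    with assms(3) show ?thesis using T_trans by blast
  next
    case False
    then have "z \<le> y" by simp
    with assms(3) that(2) show ?thesis using subtree_convex[of y x z] T_in_L by blast
  qed
  ultimately show ?thesis unfolding canonical_branch_def by blast
qed

text \<open>The immediate successors of x that lie below the limit are finitely many, so some
  c0 in S lies above all of them.  The immediate successor c of x below c0 is then the only
  one that can lie below any later node of S.\<close>
lemma canonical_branch_has_successor:
  assumes S: "limit_cut L S" and x: "x \<in> canonical_branch T S"
  shows "\<exists>c\<in>canonical_branch T S. T x c"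
proof -
  have SL: "S \<subseteq> L" and S_init: "initial_segment S" and S_unbounded: "\<forall>x\<in>S. \<exists>y\<in>S. x < y"
    using S unfolding limit_cut_def by auto
  have S_down: "z \<in> S" if "z \<le> y" "y \<in> S" for y z
    using that S_init unfolding initial_segment_def by (metis order.order_iff_strict)
  have "x \<in> S" using x unfolding canonical_branch_def by blast
  define F where "F = insert x ({j. imm_succ T x j} \<inter> S)"
  have "finite F" using finite_imm_succ \<open>x \<in> S\<close> SL unfolding F_def by auto
  moreover have "F \<subseteq> S" "F \<noteq> {}" using \<open>x \<in> S\<close> unfolding F_def by auto
  ultimately obtain c0 where c0: "c0 \<in> S" "\<And>f. f \<in> F \<Longrightarrow> f < c0"
    using S_unbounded by (metis Max_ge Max_in le_less_trans subsetD)
  then have "x < c0" unfolding F_def by blast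
  with x c0(1) have "T x c0" unfolding canonical_branch_def by auto
  then obtain c where c: "imm_succ T x c" "c = c0 \<or> T c c0"
    using imm_succ_exists_below by blast
  have "c \<le> c0" using c T_less by (meson less_imp_le order.refl)
  then have "c \<in> S" using c0 S_down by blast
  have "c = z \<or> T c z" if "z \<in> S" "c \<le> z" for z
  proof (cases "z \<le> c0")
    case True
    with c(2) that(2) c0(1) SL show ?thesis using subtree_convex by blast
  next
    case False
    then have "x < z" using \<open>T x c0\<close> T_less by (meson less_trans not_le)
    then have "T x z" using x that(1) unfolding canonical_branch_def by auto
    then obtain c' where c': "imm_succ T x c'" "c' = z \<or> T c' z"
      using imm_succ_exists_below by blast
    have "c' \<le> z" using c' T_less by (meson less_imp_le order.refl)
    then have "c' \<in> F" using c' that(1) S_down unfolding F_def by blast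
    then have "c' < c0" using c0 by blast
    with c'(2) that(1) SL False have "c' = c0 \<or> T c' c0"
      using subtree_convex[of z c' c0] by auto
    with c c' have "c = c'" using imm_succ_unique_below by blast
    with c' show ?thesis by blast
  qed
  with \<open>c \<in> S\<close> have "c \<in> canonical_branch T S" unfolding canonical_branch_def by blast
  with c(1) show ?thesis unfolding imm_succ_def by blast
qed

text \<open>Let w be the least node at or above l in the tree below z.  Its tree predecessors
  are exactly the canonical branch, which has no tree-maximum, so w cannot lie above l.\<close>
lemma canonical_branch_sup_mem:
  assumes S: "limit_cut L S" and "l \<in> S"
    and above: "\<And>x. x \<in> canonical_branch T S \<Longrightarrow> x < l"
    and below: "\<And>y. y < l \<Longrightarrow> \<exists>x\<in>canonical_branch T S. y \<le> x"
  shows "l \<in> canonical_branch T S"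
proof -
  let ?b = "canonical_branch T S"
  have SL: "S \<subseteq> L" and S_init: "initial_segment S"
    using S unfolding limit_cut_def by auto
  have "l = z \<or> T l z" if "z \<in> S" "l \<le> z" for z
  proof -
    define w where "w = (LEAST w. l \<le> w \<and> (w = z \<or> T w z))"
    have "l \<le> w \<and> (w = z \<or> T w z)"
      unfolding w_def by (rule LeastI[where k = z]) (use that(2) in auto)
    then have w: "l \<le> w" "w = z \<or> T w z" by auto
    have "w \<le> z" using w(2) T_less by (meson less_imp_le order.refl)
    have "w \<in> L"
      using \<open>w \<le> z\<close> \<open>z \<in> S\<close> SL S_init unfolding initial_segment_def
      by (metis order.order_iff_strict subsetD)
    have branch_below_w: "T x w" if "x \<in> ?b" for x
    proof -
      have "x < l" using above that .
      with \<open>l \<le> z\<close> \<open>z \<in> S\<close> that have "T x z" unfolding canonical_branch_def by auto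
      moreover have "x \<le> w" using \<open>x < l\<close> w(1) by simp
      ultimately have "x = w \<or> T x w"
        using subtree_convex[of z x w] \<open>w \<le> z\<close> \<open>z \<in> S\<close> SL by blast
      with \<open>x < l\<close> w(1) show ?thesis by auto
    qed
    have preds_w_in_branch: "y \<in> ?b" if "T y w" for y
    proof -
      have "y < l"
      proof (rule ccontr)
        assume "\<not> y < l"
        with that w(2) have "l \<le> y \<and> (y = z \<or> T y z)" using T_trans by auto
        then have "w \<le> y" unfolding w_def by (rule Least_le)
        with T_less[OF that] show False by simp
      qed
      then obtain x where x: "x \<in> ?b" "y \<le> x" using below by blast
      with that branch_below_w have "y = x \<or> T y x"
        using preds_linear T_less by (meson leD)
      with x(1) S_init show ?thesis using canonical_branch_down_closed by blast
    qed
    have "w \<le> l"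
    proof (rule le_if_preds_have_no_max[OF \<open>w \<in> L\<close>])
      show "\<exists>c. T y c \<and> T c w" if "T y w" for y
        using canonical_branch_has_successor[OF S preds_w_in_branch[OF that]] branch_below_w
        by blast
      show "y < l" if "T y w" for y
        using above preds_w_in_branch that by blast
    qed
    with w show ?thesis by simp
  qed
  with \<open>l \<in> S\<close> show ?thesis unfolding canonical_branch_def by blast
qed

lemma canonical_branch_cofinal:
  assumes S: "limit_cut L S" and "s \<in> S"
  shows "\<exists>y\<in>canonical_branch T S. s \<le> y"
proof (rule ccontr)
  assume "\<not> ?thesis"
  then have s_above: "\<forall>x\<in>canonical_branch T S. x < s" by (meson not_le)
  define l where "l = (LEAST u. \<forall>x\<in>canonical_branch T S. x < u)"
  have above: "\<forall>x\<in>canonical_branch T S. x < l"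
    unfolding l_def by (rule LeastI[of _ s]) (rule s_above)
  have "l \<le> s" unfolding l_def using s_above by (rule Least_le)
  then have "l \<in> S" using \<open>s \<in> S\<close> S unfolding limit_cut_def initial_segment_def
    by (metis order.order_iff_strict)
  moreover have "\<exists>x\<in>canonical_branch T S. y \<le> x" if "y < l" for y
    using not_less_Least[OF that[unfolded l_def]] by (meson not_le)
  ultimately have "l \<in> canonical_branch T S"
    using canonical_branch_sup_mem[OF S] above by blast
  with above show False by blast
qed

lemma canonical_branch_is_cofinal_branch:
  assumes S: "limit_cut L S"
  shows "cofinal_branch T S (canonical_branch T S)"
  unfolding cofinal_branch_def
proof (intro conjI)
  show "canonical_branch T S \<subseteq> S" unfolding canonical_branch_def by blast
  show "\<forall>x\<in>canonical_branch T S. \<forall>y\<in>canonical_branch T S. x = y \<or> T x y \<or> T y x"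
    unfolding canonical_branch_def using linear by blast
  have "initial_segment S" using S unfolding limit_cut_def by blast
  then show "\<forall>y\<in>canonical_branch T S. \<forall>x. T x y \<longrightarrow> x \<in> canonical_branch T S"
    using canonical_branch_down_closed by blast
  show "\<forall>x\<in>S. \<exists>y\<in>canonical_branch T S. x \<le> y"
    using canonical_branch_cofinal[OF S] by blast
qed

end

theorem lemma2p2:
  fixes L :: "'a::wellorder set" and T :: "'a \<Rightarrow> 'a \<Rightarrow> bool" and S :: "'a set"
  assumes "iteration_tree_order L T"
    and "almost_linear L T"
    and "limit_cut L S"
  shows "\<exists>b. (\<forall>c. cofinal_branch T S c \<longleftrightarrow> c = b) \<and>
             (\<forall>l\<in>L. S = {x. x < l} \<longrightarrow> b = {x. T x l})"
proof -
  interpret almost_linear_tree L T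
    using assms(1,2) by unfold_locales
  have "S \<subseteq> L" using assms(3) unfolding limit_cut_def by blast
  then have unique: "cofinal_branch T S c \<longleftrightarrow> c = canonical_branch T S" for c
    using cofinal_branch_eq_canonical canonical_branch_is_cofinal_branch[OF assms(3)] by blast
  show ?thesis
  proof (intro exI[of _ "canonical_branch T S"] conjI allI ballI impI)
    show "cofinal_branch T S c \<longleftrightarrow> c = canonical_branch T S" for c
      by (rule unique)
    show "canonical_branch T S = {x. T x l}" if "l \<in> L" "S = {x. x < l}" for l
      using preds_cofinal_branch[OF assms(3) that(2,1)] unique by simp
  qed
qed

end
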